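(* Let $G=(V,E)$ be a graph on $n$ vertices with adjacency matrix $A_G$, let $\{e_v : v\in V\}$ be the standard basis of $\mathbb{C}^n$, and let $\{P_v\}_{v\in V}$ be a $d/r$-representation of $G$. Let $\Gamma$ be a random unitary matrix sampled from the Haar measure on $\mathrm{U}(d)$ and define $$Q = \sum_{v \in V} e_v e_v^* \otimes \Gamma^* P_v \Gamma \in \mathbb{C}^{n\times n}\otimes \mathbb{C}^{d\times d}.$$ Then $Q$ is a stochastic block decomposition of size $d/r$, and $Q(A_G\otimes I_d)Q = O$ (for every value of $\Gamma$).
   Context: A $d/r$-representation of $G$ is a family of rank-$r$ orthogonal projectors $P_v \in \mathbb{C}^{d\times d}$, $v \in V$, with $P_vP_w = O$ for every edge $vw$. $\mathrm{U}(d)$ is the group of $d\times d$ complex unitary matrices and the Haar measure is its unique left- and right-invariant probability measure. A stochastic block decomposition of size $\alpha$ is a random variable $Q$ defined on a probability space taking values in the set of orthogonal projection matrices in $\mathbb{C}^{N\times N}$ (for some $N$) such that the entrywise expectation satisfies $\mathbb{E}[Q] = \alpha^{-1} I$. *)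

theory Defs
  imports "HOL-Analysis.Analysis" "HOL-Probability.Probability"
begin

definition adj :: "complex^'n^'m \<Rightarrow> complex^'m^'n" where
  "adj A = (\<chi> i j. cnj (A $ j $ i))"

definition unitary :: "complex^'n^'n \<Rightarrow> bool" where
  "unitary U \<longleftrightarrow> adj U ** U = mat 1 \<and> U ** adj U = mat 1"

definition unitary_group :: "(complex^'n^'n) set" where
  "unitary_group = {U. unitary U}"

definition orth_proj :: "complex^'n^'n \<Rightarrow> bool" where
  "orth_proj P \<longleftrightarrow> adj P = P \<and> P ** P = P"

definition kron :: "complex^'n^'m \<Rightarrow> complex^'q^'p \<Rightarrow> complex^('n \<times> 'q)^('m \<times> 'p)" where
  "kron A B = (\<chi> p q. A $ fst p $ fst q * B $ snd p $ snd q)"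

definition basis_proj :: "'v \<Rightarrow> complex^'v^'v" where
  "basis_proj v = (\<chi> i j. if i = v \<and> j = v then 1 else 0)"

definition simple_graph :: "('v \<Rightarrow> 'v \<Rightarrow> bool) \<Rightarrow> bool" where
  "simple_graph E \<longleftrightarrow> (\<forall>v w. E v w \<longrightarrow> E w v) \<and> (\<forall>v. \<not> E v v)"

definition adjacency_matrix :: "('v \<Rightarrow> 'v \<Rightarrow> bool) \<Rightarrow> complex^'v^'v" where
  "adjacency_matrix E = (\<chi> v w. if E v w then 1 else 0)"

definition dr_representation ::
  "('v \<Rightarrow> 'v \<Rightarrow> bool) \<Rightarrow> nat \<Rightarrow> ('v \<Rightarrow> complex^'d^'d) \<Rightarrow> bool" where
  "dr_representation E r P \<longleftrightarrow>
     (\<forall>v. orth_proj (P v) \<and> rank (P v) = r) \<and>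
     (\<forall>v w. E v w \<longrightarrow> P v ** P w = 0)"

definition haar_unitary :: "(complex^'d^'d) measure \<Rightarrow> bool" where
  "haar_unitary M \<longleftrightarrow>
     prob_space M \<and>
     sets M = sets (restrict_space borel unitary_group) \<and>
     (\<forall>V \<in> unitary_group. \<forall>A \<in> sets M.
        emeasure M ((\<lambda>U. V ** U) -` A \<inter> space M) = emeasure M A \<and>
        emeasure M ((\<lambda>U. U ** V) -` A \<inter> space M) = emeasure M A)"

definition stochastic_block_decomposition ::
  "'s measure \<Rightarrow> ('s \<Rightarrow> complex^'N^'N) \<Rightarrow> real \<Rightarrow> bool" where
  "stochastic_block_decomposition M Q \<alpha> \<longleftrightarrow>
     prob_space M \<and>
     Q \<in> borel_measurable M \<and>
     (\<forall>x \<in> space M. orth_proj (Q x)) \<and>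
     (\<forall>i j. integrable M (\<lambda>x. Q x $ i $ j) \<and>
            (LINT x|M. Q x $ i $ j) = (if i = j then complex_of_real (inverse \<alpha>) else 0))"

end

theory Submission
  imports Defs
begin

text \<open>The matrix \<open>Q \<Gamma>\<close> is block diagonal with blocks \<open>\<Gamma>\<^sup>* P\<^sub>v \<Gamma>\<close>. Hence it is an
  orthogonal projection, and the \<open>(v, w)\<close> block of \<open>Q (A\<^sub>G \<otimes> I) Q\<close> is
  \<open>(A\<^sub>G)\<^sub>v\<^sub>w \<Gamma>\<^sup>* P\<^sub>v P\<^sub>w \<Gamma>\<close>, which vanishes because \<open>P\<^sub>v P\<^sub>w = 0\<close> along edges.
  For the expectation, right invariance of the Haar measure makes \<open>X = \<bbbE>[\<Gamma>\<^sup>* P \<Gamma>]\<close>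
  invariant under conjugation by every unitary; conjugating with permutation and sign
  matrices forces \<open>X\<close> to be scalar, and \<open>tr X = tr P = rank P\<close> for a projection \<open>P\<close>,
  so \<open>X = (r/d) I\<close>.\<close>

lemma adj_adj [simp]: "adj (adj A) = A"
  by (simp add: vec_eq_iff adj_def)

lemma adj_matrix_mul: "adj (A ** B) = adj B ** adj A"
  by (simp add: vec_eq_iff adj_def matrix_matrix_mult_def mult.commute)

lemma unitary_matrix_mul: "unitary U \<Longrightarrow> unitary V \<Longrightarrow> unitary (U ** V)"
  unfolding unitary_def adj_matrix_mul by (metis matrix_mul_assoc matrix_mul_lid)

lemma adj_conj_nth:
  "(adj V ** Y ** V) $ i $ j = (\<Sum>k\<in>UNIV. \<Sum>l\<in>UNIV. cnj (V $ k $ i) * Y $ k $ l * V $ l $ j)"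
  by (simp add: matrix_matrix_mult_def adj_def sum_distrib_right) (subst sum.swap, simp)

lemma adj_conj_mult: "adj (U ** V) ** Y ** (U ** V) = adj V ** (adj U ** Y ** U) ** V"
  unfolding adj_matrix_mul by (metis matrix_mul_assoc)

lemma continuous_on_adj_conj: "continuous_on S (\<lambda>U::complex^'n::finite^'n. adj U ** Y ** U)"
proof -
  have entries: "(\<lambda>U. adj U ** Y ** U) =
      (\<lambda>U. \<chi> i j. \<Sum>k\<in>UNIV. \<Sum>l\<in>UNIV. cnj (U $ k $ i) * Y $ k $ l * U $ l $ j)"
    by (simp add: fun_eq_iff vec_eq_iff adj_conj_nth)
  show ?thesis
    unfolding entries by (intro continuous_intros)
qed

lemma unitary_conj_mult:
  assumes "unitary U"
  shows "(adj U ** A ** U) ** (adj U ** B ** U) = adj U ** (A ** B) ** U"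
proof -
  have "(adj U ** A ** U) ** (adj U ** B ** U) = adj U ** A ** (U ** adj U) ** B ** U"
    by (simp only: matrix_mul_assoc)
  also have "\<dots> = adj U ** A ** B ** U"
    using assms by (simp add: unitary_def)
  finally show ?thesis
    by (simp only: matrix_mul_assoc)
qed

lemma orth_proj_unitary_conj:
  assumes "unitary U" "orth_proj P"
  shows "orth_proj (adj U ** P ** U)"
  using assms unitary_conj_mult[OF assms(1), of P P]
  by (simp add: orth_proj_def adj_matrix_mul matrix_mul_assoc)

lemma trace_unitary_conj:
  assumes "unitary U"
  shows "trace (adj U ** Y ** U) = trace Y"
proof -
  have "trace (adj U ** Y ** U) = trace ((U ** adj U) ** Y)"
    by (simp only: trace_mul_sym[of _ U] matrix_mul_assoc)
  then show ?thesis
    using assms by (simp add: unitary_def)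
qed

lemma norm_unitary_nth_le:
  fixes U :: "complex^'n::finite^'n"
  assumes "unitary U"
  shows "norm (U $ k $ i) \<le> 1"
proof -
  have "(adj U ** U) $ i $ i = 1"
    using assms by (simp add: unitary_def mat_def)
  moreover have "cnj z * z = complex_of_real ((norm z)\<^sup>2)" for z :: complex
    by (metis complex_norm_square mult.commute)
  ultimately have "(\<Sum>m\<in>UNIV. complex_of_real ((norm (U $ m $ i))\<^sup>2)) = 1"
    by (simp add: matrix_matrix_mult_def adj_def)
  then have column: "(\<Sum>m\<in>UNIV. (norm (U $ m $ i))\<^sup>2) = 1"
    by (metis of_real_eq_1_iff of_real_sum)
  have "(norm (U $ k $ i))\<^sup>2 \<le> (\<Sum>m\<in>UNIV. (norm (U $ m $ i))\<^sup>2)"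
    by (rule member_le_sum) auto
  then have "(norm (U $ k $ i))\<^sup>2 \<le> 1"
    using column by simp
  then show ?thesis
    by (simp add: power_le_one_iff abs_square_le_1)
qed

lemma norm_unitary_conj_nth_le:
  fixes U :: "complex^'n::finite^'n"
  assumes "unitary U"
  shows "norm ((adj U ** Y ** U) $ i $ j) \<le> (\<Sum>k\<in>UNIV. \<Sum>l\<in>UNIV. norm (Y $ k $ l))"
proof -
  have "norm ((adj U ** Y ** U) $ i $ j)
      \<le> (\<Sum>k\<in>UNIV. \<Sum>l\<in>UNIV. norm (cnj (U $ k $ i) * Y $ k $ l * U $ l $ j))"
    unfolding adj_conj_nth by (intro order.trans[OF norm_sum] sum_mono norm_sum)
  also have "\<dots> \<le> (\<Sum>k\<in>UNIV. \<Sum>l\<in>UNIV. norm (Y $ k $ l))"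
  proof (intro sum_mono)
    fix k l
    have "norm (U $ k $ i) * norm (Y $ k $ l) * norm (U $ l $ j) \<le> 1 * norm (Y $ k $ l) * 1"
      using norm_unitary_nth_le[OF assms] by (intro mult_mono) auto
    then show "norm (cnj (U $ k $ i) * Y $ k $ l * U $ l $ j) \<le> norm (Y $ k $ l)"
      by (simp add: norm_mult)
  qed
  finally show ?thesis .
qed

lemma trace_idempotent_eq_rank:
  fixes A :: "complex^'n::finite^'n"
  assumes idem: "A ** A = A"
  shows "trace A = of_nat (rank A)"
proof -
  obtain B where B: "B \<subseteq> rows A" "vec.independent B" "rows A \<subseteq> vec.span B"
      "card B = vec.dim (rows A)"
    using vec.basis_exists by blast
  have "rows A = range (\<lambda>i. row i A)"
    by (auto simp: rows_def)
  then have "finite (rows A)"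
    by simp
  then have finite_B: "finite B"
    using B(1) finite_subset by blast
  define c where "c i b = vec.representation B (row i A) b" for i b
  have row_span: "row i A \<in> vec.span B" for i
    using B(3) by (auto simp: rows_def)
  have row_expansion: "row i A = (\<Sum>b\<in>B. c i b *s b)" for i
    unfolding c_def using vec.sum_representation_eq[OF B(2) row_span finite_B] by simp
  \<comment> \<open>Right multiplication by \<open>A\<close> fixes every row of \<open>A\<close>, so the coefficient vectors
      of the rows are dual to the basis of the row space.\<close>
  have dual: "(\<Sum>i\<in>UNIV. b $ i * c i b') = (if b' = b then 1 else 0)" if "b \<in> B" for b b'
  proof -
    from that B(1) obtain k where k: "b = row k A"
      by (auto simp: rows_def)
    have "(\<Sum>i\<in>UNIV. b $ i *s row i A) = row k (A ** A)"
      by (simp add: k vec_eq_iff row_def matrix_matrix_mult_def sum_component)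
    then have fixed: "(\<Sum>i\<in>UNIV. b $ i *s row i A) = b"
      using idem k by simp
    have "vec.representation B (\<Sum>i\<in>UNIV. b $ i *s row i A) b' = (\<Sum>i\<in>UNIV. b $ i * c i b')"
      by (subst vec.representation_sum[OF B(2)])
         (auto intro: vec.span_scale row_span
               simp: vec.representation_scale[OF B(2) row_span] c_def)
    then show ?thesis
      using fixed vec.representation_basis[OF B(2) that] by simp
  qed
  have "trace A = (\<Sum>i\<in>UNIV. row i A $ i)"
    by (simp add: trace_def row_def)
  also have "\<dots> = (\<Sum>i\<in>UNIV. \<Sum>b\<in>B. c i b * b $ i)"
    by (subst row_expansion) (simp add: sum_component)
  also have "\<dots> = (\<Sum>b\<in>B. \<Sum>i\<in>UNIV. b $ i * c i b)"
    by (subst sum.swap) (simp add: mult.commute)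
  also have "\<dots> = (\<Sum>b\<in>B. 1)"
    by (intro sum.cong refl) (simp add: dual)
  also have "\<dots> = of_nat (rank A)"
    using B(4) by (simp add: row_rank_def_gen)
  finally show ?thesis .
qed

definition monomial_matrix :: "('n::finite \<Rightarrow> 'n) \<Rightarrow> ('n \<Rightarrow> complex) \<Rightarrow> complex^'n^'n" where
  "monomial_matrix \<tau> s = (\<chi> i j. if j = \<tau> i then s i else 0)"

lemma sum_involution_delta:
  fixes \<tau> :: "'n::finite \<Rightarrow> 'n"
  assumes "\<And>x. \<tau> (\<tau> x) = x"
  shows "(\<Sum>k\<in>UNIV. if i = \<tau> k then g k else 0) = (g (\<tau> i) :: 'a::comm_monoid_add)"
proof -
  have "(\<Sum>k\<in>UNIV. if i = \<tau> k then g k else 0) = (\<Sum>k\<in>UNIV. if k = \<tau> i then g k else 0)"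
    by (intro sum.cong refl) (metis assms)
  then show ?thesis
    by simp
qed

lemma unitary_monomial_matrix:
  assumes \<tau>: "\<And>x. \<tau> (\<tau> x) = x" and s: "\<And>i. cnj (s i) * s i = 1"
  shows "unitary (monomial_matrix \<tau> s)"
proof -
  have s': "s i * cnj (s i) = 1" for i
    using s[of i] by (simp add: mult.commute)
  have "adj (monomial_matrix \<tau> s) ** monomial_matrix \<tau> s = mat 1"
    by (simp add: vec_eq_iff matrix_matrix_mult_def adj_def monomial_matrix_def mat_def
        if_distrib[of "\<lambda>x. x * _"] if_distrib[of "\<lambda>x. _ * x"] if_distrib[of cnj]
        sum_involution_delta[OF \<tau>] s cong: if_cong) (metis \<tau>)
  moreover have "monomial_matrix \<tau> s ** adj (monomial_matrix \<tau> s) = mat 1"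
    by (simp add: vec_eq_iff matrix_matrix_mult_def adj_def monomial_matrix_def mat_def
        if_distrib[of "\<lambda>x. x * _"] if_distrib[of "\<lambda>x. _ * x"] if_distrib[of cnj] s'
        cong: if_cong) (metis \<tau>)
  ultimately show ?thesis
    by (simp add: unitary_def)
qed

lemma monomial_matrix_conj_nth:
  assumes \<tau>: "\<And>x. \<tau> (\<tau> x) = x"
  shows "(adj (monomial_matrix \<tau> s) ** X ** monomial_matrix \<tau> s) $ i $ j =
    cnj (s (\<tau> i)) * X $ \<tau> i $ \<tau> j * s (\<tau> j)"
proof -
  have "adj (monomial_matrix \<tau> s) ** X = (\<chi> i l. cnj (s (\<tau> i)) * X $ \<tau> i $ l)"
    by (simp add: vec_eq_iff matrix_matrix_mult_def adj_def monomial_matrix_def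
        if_distrib[of "\<lambda>x. x * _"] if_distrib[of cnj] sum_involution_delta[OF \<tau>] cong: if_cong)
  then show ?thesis
    by (simp add: matrix_matrix_mult_def monomial_matrix_def if_distrib[of "\<lambda>x. _ * x"]
        sum_involution_delta[OF \<tau>] cong: if_cong)
qed

lemma unitarily_invariant_imp_scalar:
  fixes X :: "complex^'n::finite^'n"
  assumes invariant: "\<And>V. unitary V \<Longrightarrow> adj V ** X ** V = X"
  shows "\<exists>c. X = mat c"
proof -
  fix k
  define c where "c = X $ k $ k"
  have entries: "X $ i $ j = (if i = j then c else 0)" for i j
  proof (cases "i = j")
    case True
    define \<tau> where "\<tau> x = (if x = i then k else if x = k then i else x)" for x
    have \<tau>: "\<tau> (\<tau> x) = x" for x
      by (auto simp: \<tau>_def)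
    have "X $ i $ i = (adj (monomial_matrix \<tau> (\<lambda>_. 1)) ** X ** monomial_matrix \<tau> (\<lambda>_. 1)) $ i $ i"
      using invariant[OF unitary_monomial_matrix[OF \<tau>]] by simp
    also have "\<dots> = X $ k $ k"
      by (simp add: monomial_matrix_conj_nth[OF \<tau>] \<tau>_def)
    finally show ?thesis
      using True by (simp add: c_def)
  next
    case False
    define s where "s x = (if x = i then -1 else 1 :: complex)" for x
    have "X $ i $ j = (adj (monomial_matrix id s) ** X ** monomial_matrix id s) $ i $ j"
      using invariant[OF unitary_monomial_matrix[of id s]] by (simp add: s_def)
    also have "\<dots> = - X $ i $ j"
      using False by (simp add: monomial_matrix_conj_nth s_def)
    finally show ?thesis
      using False by simp
  qed
  have "X = mat c"
    by (simp add: vec_eq_iff mat_def entries)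
  then show ?thesis ..
qed

lemma space_haar_unitary: "haar_unitary M \<Longrightarrow> space M = unitary_group"
  unfolding haar_unitary_def
  by (metis sets_eq_imp_space_eq space_restrict_space space_borel inf_top_right)

lemma measurable_haar_unitary_continuous:
  assumes "haar_unitary M" "continuous_on unitary_group f"
  shows "f \<in> borel_measurable M"
  using borel_measurable_continuous_on_restrict[OF assms(2)] assms(1)
  unfolding haar_unitary_def by (metis measurable_cong_sets)

lemma continuous_on_matrix_mul_right: "continuous_on S (\<lambda>U::complex^'n::finite^'m. U ** V)"
  unfolding matrix_matrix_mult_def by (intro continuous_intros)

lemma measurable_haar_unitary_mult_right:
  assumes "haar_unitary M" "unitary V"
  shows "(\<lambda>U. U ** V) \<in> M \<rightarrow>\<^sub>M M"
proof -
  have "(\<lambda>U. U ** V) \<in> restrict_space borel unitary_group \<rightarrow>\<^sub>M restrict_space borel unitary_group"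
    using assms(2)
    by (intro measurable_restrict_space3 borel_measurable_continuous_onI continuous_on_matrix_mul_right)
       (auto simp: unitary_group_def unitary_matrix_mul)
  then show ?thesis
    using assms(1) unfolding haar_unitary_def by (metis measurable_cong_sets)
qed

lemma integral_haar_unitary_mult_right:
  fixes f :: "complex^'n::finite^'n \<Rightarrow> 'b::{banach,second_countable_topology}"
  assumes haar: "haar_unitary M" and "unitary V" and "f \<in> borel_measurable M"
  shows "(LINT U|M. f (U ** V)) = (LINT U|M. f U)"
proof -
  note measurable = measurable_haar_unitary_mult_right[OF haar \<open>unitary V\<close>]
  have "distr M M (\<lambda>U. U ** V) = M"
  proof (rule measure_eqI)
    fix A
    assume "A \<in> sets (distr M M (\<lambda>U. U ** V))"
    then show "emeasure (distr M M (\<lambda>U. U ** V)) A = emeasure M A"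
      using emeasure_distr[OF measurable] haar \<open>unitary V\<close>
      by (simp add: haar_unitary_def unitary_group_def)
  qed simp
  then show ?thesis
    using integral_distr[OF measurable assms(3)] by simp
qed

lemma integrable_haar_unitary_conj_nth:
  assumes "haar_unitary M"
  shows "integrable M (\<lambda>U. (adj U ** Y ** U) $ i $ j)"
proof -
  interpret prob_space M
    using assms by (simp add: haar_unitary_def)
  show ?thesis
  proof (rule integrable_const_bound)
    show "AE U in M. norm ((adj U ** Y ** U) $ i $ j) \<le> (\<Sum>k\<in>UNIV. \<Sum>l\<in>UNIV. norm (Y $ k $ l))"
      using space_haar_unitary[OF assms] norm_unitary_conj_nth_le
      by (intro AE_I2) (auto simp: unitary_group_def)
    show "(\<lambda>U. (adj U ** Y ** U) $ i $ j) \<in> borel_measurable M"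
      by (intro measurable_haar_unitary_continuous[OF assms] continuous_on_component
          continuous_on_adj_conj)
  qed
qed

definition expectation_matrix :: "'s measure \<Rightarrow> ('s \<Rightarrow> complex^'n^'m) \<Rightarrow> complex^'n^'m" where
  "expectation_matrix M F = (\<chi> i j. LINT x|M. F x $ i $ j)"

lemma expectation_matrix_conj:
  assumes "\<And>i j. integrable M (\<lambda>x. F x $ i $ j)"
  shows "adj V ** expectation_matrix M F ** V = expectation_matrix M (\<lambda>x. adj V ** F x ** V)"
  using assms
  by (simp add: vec_eq_iff adj_conj_nth expectation_matrix_def Bochner_Integration.integral_sum
      integrable_sum)

lemma trace_expectation_matrix:
  assumes "\<And>i j. integrable M (\<lambda>x. F x $ i $ j)"
  shows "trace (expectation_matrix M F) = (LINT x|M. trace (F x))"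
  using assms by (simp add: trace_def expectation_matrix_def Bochner_Integration.integral_sum)

lemma expectation_matrix_haar_unitary_conj:
  fixes Y :: "complex^'n::finite^'n"
  assumes haar: "haar_unitary M"
  shows "expectation_matrix M (\<lambda>U. adj U ** Y ** U) = mat (trace Y / of_nat CARD('n))"
proof -
  interpret prob_space M
    using haar by (simp add: haar_unitary_def)
  define X where "X = expectation_matrix M (\<lambda>U. adj U ** Y ** U)"
  note integrable = integrable_haar_unitary_conj_nth[OF haar]
  have "adj V ** X ** V = X" if "unitary V" for V
  proof -
    have "adj V ** X ** V = expectation_matrix M (\<lambda>U. adj (U ** V) ** Y ** (U ** V))"
      unfolding X_def expectation_matrix_conj[OF integrable] adj_conj_mult ..
    also have "\<dots> = X"
    proof -
      have "(LINT U|M. (adj (U ** V) ** Y ** (U ** V)) $ i $ j) =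
          (LINT U|M. (adj U ** Y ** U) $ i $ j)" for i j
        by (intro integral_haar_unitary_mult_right[OF haar that]
            measurable_haar_unitary_continuous[OF haar] continuous_on_component
            continuous_on_adj_conj)
      then show ?thesis
        by (simp add: X_def expectation_matrix_def)
    qed
    finally show ?thesis .
  qed
  then obtain c where c: "X = mat c"
    using unitarily_invariant_imp_scalar by blast
  have "of_nat CARD('n) * c = trace X"
    by (simp add: c trace_def mat_def)
  also have "\<dots> = (LINT U|M. trace (adj U ** Y ** U))"
    unfolding X_def by (rule trace_expectation_matrix[OF integrable])
  also have "\<dots> = (LINT U|M. trace Y)"
    using space_haar_unitary[OF haar]
    by (intro Bochner_Integration.integral_cong) (auto simp: trace_unitary_conj unitary_group_def)
  also have "\<dots> = trace Y"
    by (simp add: prob_space)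
  finally have "c = trace Y / of_nat CARD('n)"
    by (simp add: eq_divide_eq mult.commute)
  then show ?thesis
    using c by (simp add: X_def)
qed

definition block_diag ::
    "('v::finite \<Rightarrow> complex^'d::finite^'d) \<Rightarrow> complex^('v \<times> 'd)^('v \<times> 'd)" where
  "block_diag B = (\<chi> p q. if fst p = fst q then B (fst p) $ snd p $ snd q else 0)"

lemma sum_UNIV_prod:
  "(\<Sum>p\<in>UNIV. f p) = (\<Sum>a\<in>UNIV. \<Sum>b\<in>UNIV. f (a, b :: 'b::finite))"
  by (simp add: sum.cartesian_product UNIV_Times_UNIV[symmetric] del: UNIV_Times_UNIV)

lemma sum_if_const_cond: "(\<Sum>x\<in>S. if P then f x else 0) = (if P then sum f S else 0)"
  by simp

lemma sum_delta_both:
  "(\<Sum>x\<in>(UNIV :: 'a::finite set). if a = x \<and> b = x then f x else 0) =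
    (if a = b then f a else 0)"
  by (cases "a = b") (auto simp: sum.neutral)

lemma sum_kron_basis_proj: "(\<Sum>v\<in>UNIV. kron (basis_proj v) (B v)) = block_diag B"
  by (simp add: vec_eq_iff sum_component kron_def basis_proj_def block_diag_def
      if_distrib[of "\<lambda>x. x * _"] sum_delta_both sum_if_const_cond cong: if_cong)

lemma block_diag_mult: "block_diag B ** block_diag C = block_diag (\<lambda>v. B v ** C v)"
  by (simp add: vec_eq_iff matrix_matrix_mult_def block_diag_def sum_UNIV_prod
      if_distrib[of "\<lambda>x. x * _"] if_distrib[of "\<lambda>x. _ * x"] sum_if_const_cond cong: if_cong)

lemma adj_block_diag: "adj (block_diag B) = block_diag (\<lambda>v. adj (B v))"
  by (auto simp: vec_eq_iff adj_def block_diag_def)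

lemma orth_proj_block_diag: "(\<And>v. orth_proj (B v)) \<Longrightarrow> orth_proj (block_diag B)"
  by (simp add: orth_proj_def adj_block_diag block_diag_mult)

lemma block_diag_kron_mult_block_diag:
  "block_diag B ** kron A (mat 1) ** block_diag C =
    (\<chi> p q. A $ fst p $ fst q * (B (fst p) ** C (fst q)) $ snd p $ snd q)"
proof -
  have left: "block_diag B ** kron A (mat 1) =
      (\<chi> p q. B (fst p) $ snd p $ snd q * A $ fst p $ fst q)"
    by (simp add: vec_eq_iff matrix_matrix_mult_def block_diag_def sum_UNIV_prod kron_def mat_def
        if_distrib[of "\<lambda>x. x * _"] if_distrib[of "\<lambda>x. _ * x"] sum_if_const_cond cong: if_cong)
  show ?thesis
    unfolding left
    by (simp add: vec_eq_iff matrix_matrix_mult_def block_diag_def sum_UNIV_prod sum_distrib_left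
        mult_ac if_distrib[of "\<lambda>x. x * _"] if_distrib[of "\<lambda>x. _ * x"] sum_if_const_cond
        cong: if_cong)
qed

lemma block_diag_mat: "block_diag (\<lambda>v. mat c) = mat c"
  by (auto simp: vec_eq_iff block_diag_def mat_def prod_eq_iff)

lemma continuous_on_block_diag:
  assumes "\<And>v. continuous_on S (\<lambda>x. B x v)"
  shows "continuous_on S (\<lambda>x. block_diag (B x))"
  unfolding block_diag_def
proof (intro continuous_on_vec_lambda)
  fix p q
  show "continuous_on S (\<lambda>x. if fst p = fst q then B x (fst p) $ snd p $ snd q else 0)"
    using assms by (cases "fst p = fst q") (simp_all add: continuous_on_component)
qed

lemma integrable_block_diag_nth:
  "(\<And>v i j. integrable M (\<lambda>x. B x v $ i $ j)) \<Longrightarrow>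
    integrable M (\<lambda>x. block_diag (B x) $ p $ q)"
  by (cases "fst p = fst q") (simp_all add: block_diag_def)

lemma expectation_matrix_block_diag:
  "expectation_matrix M (\<lambda>x. block_diag (B x)) =
    block_diag (\<lambda>v. expectation_matrix M (\<lambda>x. B x v))"
  by (simp add: vec_eq_iff expectation_matrix_def block_diag_def)

theorem lemma2p4:
  fixes E :: "'v::finite \<Rightarrow> 'v \<Rightarrow> bool"
    and P :: "'v \<Rightarrow> complex^'d::finite^'d"
    and r :: nat
    and M :: "(complex^'d^'d) measure"
  assumes "simple_graph E"
    and "dr_representation E r P"
    and "haar_unitary M"
  defines "Q \<equiv> (\<lambda>\<Gamma>. \<Sum>v\<in>UNIV. kron (basis_proj v) (adj \<Gamma> ** P v ** \<Gamma>))"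
  shows "stochastic_block_decomposition M Q (real CARD('d) / real r)
     \<and> (\<forall>\<Gamma> \<in> space M.
          Q \<Gamma> ** kron (adjacency_matrix E) (mat 1 :: complex^'d^'d) ** Q \<Gamma> = 0)"
proof -
  note haar = \<open>haar_unitary M\<close>
  have proj: "orth_proj (P v)" and rank: "rank (P v) = r" for v
    using \<open>dr_representation E r P\<close> by (auto simp: dr_representation_def)
  have orthogonal: "P v ** P w = 0" if "E v w" for v w
    using \<open>dr_representation E r P\<close> that by (simp add: dr_representation_def)
  have trace: "trace (P v) = of_nat r" for v
    using proj[of v] rank[of v] by (simp add: orth_proj_def trace_idempotent_eq_rank)
  have unitary: "unitary \<Gamma>" if "\<Gamma> \<in> space M" for \<Gamma>
    using that space_haar_unitary[OF haar] by (simp add: unitary_group_def)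
  have Q: "Q = (\<lambda>\<Gamma>. block_diag (\<lambda>v. adj \<Gamma> ** P v ** \<Gamma>))"
    by (simp add: Q_def sum_kron_basis_proj)
  have "Q \<in> borel_measurable M"
    unfolding Q by (intro measurable_haar_unitary_continuous[OF haar] continuous_on_block_diag
        continuous_on_adj_conj)
  moreover have "\<forall>\<Gamma>\<in>space M. orth_proj (Q \<Gamma>)"
    unfolding Q by (auto intro: orth_proj_block_diag orth_proj_unitary_conj unitary proj)
  moreover have "integrable M (\<lambda>\<Gamma>. Q \<Gamma> $ p $ q)" for p q
    unfolding Q by (intro integrable_block_diag_nth integrable_haar_unitary_conj_nth[OF haar])
  moreover have "expectation_matrix M Q = mat (of_nat r / of_nat CARD('d))"
    unfolding Q expectation_matrix_block_diag expectation_matrix_haar_unitary_conj[OF haar]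
    by (simp add: trace block_diag_mat)
  ultimately have "stochastic_block_decomposition M Q (real CARD('d) / real r)"
    using haar
    by (auto simp: stochastic_block_decomposition_def haar_unitary_def expectation_matrix_def
        vec_eq_iff mat_def)
  moreover have "Q \<Gamma> ** kron (adjacency_matrix E) (mat 1) ** Q \<Gamma> = 0" if "\<Gamma> \<in> space M" for \<Gamma>
    unfolding Q block_diag_kron_mult_block_diag unitary_conj_mult[OF unitary[OF that]]
    by (simp add: vec_eq_iff adjacency_matrix_def orthogonal)
  ultimately show ?thesis
    by blast
qed

end
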